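(* Let $(b_n)_{n\ge0}$ be a sequence of real numbers such that (1) $0\le b_n\le 1$ for all $n$; (2) $\limsup_{n\to\infty} b_n<1$; (3) $\sum_{k=0}^n b_kb_{n-k}\to\infty$ as $n\to\infty$. Then there is no set $A\subseteq\mathbb{N}$ such that $$R_A(n)=\sum_{k=0}^n b_kb_{n-k}+o\left(\Big(\sum_{k=0}^n b_kb_{n-k}\Big)^{1/2}\right)\quad (n\to\infty).$$
   Context: $\mathbb{N}$ denotes the set of non-negative integers. For $A\subseteq\mathbb{N}$, $R_A(n)$ denotes the number of ordered pairs $(a,a')$ with $a,a'\in A$ and $a+a'=n$. *)

theory Defs
  imports "HOL-Analysis.Analysis" "HOL-Library.Landau_Symbols"
begin

definition rep_count :: "nat set \<Rightarrow> nat \<Rightarrow> nat" where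
  "rep_count A n = card {(a, a'). a \<in> A \<and> a' \<in> A \<and> a + a' = n}"

definition conv_sq :: "(nat \<Rightarrow> real) \<Rightarrow> nat \<Rightarrow> real" where
  "conv_sq b n = (\<Sum>k=0..n. b k * b (n - k))"

end

theory Submission
  imports Defs "HOL-Computational_Algebra.Polynomial" "HOL-Library.Real_Mod"
begin

(*
  Let f(z) = sum_{a in A} z^a and g(z) = sum_n b_n z^n, so that f^2 and g^2 have the coefficients
  R_A(n) and c_n = sum_k b_k b_{n-k}. For 0 <= s < 1, Parseval's identity on the circle |z|^2 = s,
  the pointwise bound |f|^2 <= |g|^2 + |f^2 - g^2| and Cauchy-Schwarz give, since 1_A^2 = 1_A,

    f(s) <= sum_n b_n^2 s^n + (sum_n (R_A(n) - c_n)^2 s^n)^(1/2).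

  If eventually b_n <= beta < 1 and |R_A(n) - c_n| <= eps sqrt(c_n), the right-hand side is at most
  (beta + eps) g(s) + O(1), whereas f(s)^2 = sum_n R_A(n) s^n >= (1 - eps) g(s)^2 - O(1). For
  eps = (1 - beta)/4 this bounds g(s) uniformly in s, contradicting g(s)^2 = sum_n c_n s^n -> oo
  as s -> 1. Parseval's identity is used in its discrete form, for truncations of f and g sampled
  at the roots of unity.
*)

section \<open>Parseval's identity at the roots of unity\<close>

lemma sum_roots_of_unity_orthogonal:
  assumes "k < N" "l < N"
  shows "(\<Sum>j<N. cis (2*pi*real j/N) ^ k * cnj (cis (2*pi*real j/N) ^ l)) = (if k = l then of_nat N else 0)"
proof (cases "k = l")
  case True
  then show ?thesis by (simp add: cis_cnj cis_mult flip: power_mult_distrib)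
next
  case False
  define z where "z = cis (2*pi*(real k - real l)/N)"
  have term_eq: "cis (2*pi*real j/N) ^ k * cnj (cis (2*pi*real j/N) ^ l) = z ^ j" for j :: nat
    unfolding z_def by (simp add: Complex.DeMoivre cis_cnj cis_mult algebra_simps diff_divide_distrib)
  have "z ^ N = cis (2*pi*(real k - real l))"
    using assms unfolding z_def by (simp add: Complex.DeMoivre)
  also have "\<dots> = 1"
    by (rule cis_multiple_2pi) (metis Ints_diff Ints_of_nat)
  finally have "z ^ N = 1" .
  moreover have "z \<noteq> 1"
  proof
    assume "z = 1"
    then obtain m :: int where "2*pi*(real k - real l)/N = of_int m * (2*pi)"
      unfolding z_def cis_eq_1_iff by blast
    then have "(2*pi) * (real k - real l) = (2*pi) * (of_int m * N)"
      using assms by (simp add: field_simps)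
    then have "real k - real l = of_int m * N"
      by (simp only: mult_cancel_left) simp
    then have "real_of_int (int k - int l) = real_of_int (m * int N)"
      by simp
    then have "int k - int l = m * int N"
      by (simp only: of_int_eq_iff)
    moreover have "\<bar>int k - int l\<bar> < int N"
      using assms by linarith
    ultimately have "\<bar>m\<bar> * int N < 1 * int N"
      by (simp add: abs_mult)
    then have "m = 0"
      by (simp only: mult_less_cancel_right) simp
    with \<open>int k - int l = m * int N\<close> False show False
      by simp
  qed
  ultimately have "(\<Sum>j<N. z ^ j) = 0"
    by (simp add: sum_gp_strict)
  with False show ?thesis
    by (simp only: term_eq) simp
qed

definition coeff_sqnorm :: "complex poly \<Rightarrow> real" where
  "coeff_sqnorm p = (\<Sum>k\<le>degree p. (cmod (coeff p k))\<^sup>2)"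

lemma coeff_sqnorm_nonneg: "0 \<le> coeff_sqnorm p"
  by (simp add: coeff_sqnorm_def sum_nonneg)

lemma coeff_sqnorm_eq_sum:
  assumes "degree p < N"
  shows "coeff_sqnorm p = (\<Sum>k<N. (cmod (coeff p k))\<^sup>2)"
  unfolding coeff_sqnorm_def
  by (rule sum.mono_neutral_left) (use assms in \<open>auto simp: coeff_eq_0\<close>)

lemma parseval_roots_of_unity:
  assumes "degree p < N"
  shows "(\<Sum>j<N. (cmod (poly p (cis (2*pi*real j/N))))\<^sup>2) = N * coeff_sqnorm p"
proof -
  define w where "w j = cis (2*pi*real j/N)" for j :: nat
  define c where "c = coeff p"
  have poly_w: "poly p (w j) = (\<Sum>k<N. c k * w j ^ k)" for j
  proof -
    have "poly p (w j) = (\<Sum>k\<le>degree p. c k * w j ^ k)"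
      unfolding c_def by (rule poly_altdef)
    also have "\<dots> = (\<Sum>k<N. c k * w j ^ k)"
      by (rule sum.mono_neutral_left) (use assms in \<open>auto simp: c_def coeff_eq_0\<close>)
    finally show ?thesis .
  qed
  have "complex_of_real (\<Sum>j<N. (cmod (poly p (w j)))\<^sup>2)
      = (\<Sum>j<N. poly p (w j) * cnj (poly p (w j)))"
    by (simp only: of_real_sum complex_norm_square)
  also have "\<dots> = (\<Sum>j<N. \<Sum>k<N. \<Sum>l<N. c k * cnj (c l) * (w j ^ k * cnj (w j ^ l)))"
    by (simp add: poly_w sum_product cnj_sum mult_ac)
  also have "\<dots> = (\<Sum>k<N. \<Sum>j<N. \<Sum>l<N. c k * cnj (c l) * (w j ^ k * cnj (w j ^ l)))"
    by (rule sum.swap)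
  also have "\<dots> = (\<Sum>k<N. \<Sum>l<N. \<Sum>j<N. c k * cnj (c l) * (w j ^ k * cnj (w j ^ l)))"
    by (rule sum.cong[OF refl]) (rule sum.swap)
  also have "\<dots> = (\<Sum>k<N. \<Sum>l<N. c k * cnj (c l) * (\<Sum>j<N. w j ^ k * cnj (w j ^ l)))"
    by (simp only: sum_distrib_left)
  also have "\<dots> = (\<Sum>k<N. \<Sum>l<N. if l = k then of_nat N * (c k * cnj (c k)) else 0)"
  proof (intro sum.cong refl)
    fix k l
    assume "k \<in> {..<N}" "l \<in> {..<N}"
    then show "c k * cnj (c l) * (\<Sum>j<N. w j ^ k * cnj (w j ^ l))
        = (if l = k then of_nat N * (c k * cnj (c k)) else 0)"
      unfolding w_def by (subst sum_roots_of_unity_orthogonal) auto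
  qed
  also have "\<dots> = (\<Sum>k<N. of_nat N * (c k * cnj (c k)))"
    by simp
  also have "\<dots> = complex_of_real (N * coeff_sqnorm p)"
    by (simp only: coeff_sqnorm_eq_sum[OF assms] c_def of_real_mult of_real_sum of_real_of_nat_eq
        complex_norm_square sum_distrib_left)
  finally show ?thesis
    unfolding w_def of_real_eq_iff .
qed

lemma coeff_sqnorm_le_square_diff:
  "coeff_sqnorm p \<le> coeff_sqnorm q + sqrt (coeff_sqnorm (p*p - q*q))"
proof -
  define D where "D = p*p - q*q"
  define N where "N = 2 * (degree p + degree q) + 1"
  define z where "z j = cis (2*pi*real j/N)" for j :: nat
  have "degree D \<le> 2 * (degree p + degree q)"
    unfolding D_def using degree_mult_le[of p p] degree_mult_le[of q q]
    by (intro degree_diff_le) auto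
  then have deg: "degree p < N" "degree q < N" "degree D < N"
    unfolding N_def by auto
  have "(cmod (poly p (z j)))\<^sup>2 = cmod ((poly q (z j))\<^sup>2 + poly D (z j))" for j
    by (simp add: D_def norm_mult power2_eq_square)
  then have pointwise: "(cmod (poly p (z j)))\<^sup>2 \<le> (cmod (poly q (z j)))\<^sup>2 + cmod (poly D (z j))" for j
    by (metis norm_power norm_triangle_ineq)
  have "(\<Sum>j<N. cmod (poly D (z j)) * 1)\<^sup>2 \<le> (\<Sum>j<N. (cmod (poly D (z j)))\<^sup>2) * (\<Sum>j<N. 1\<^sup>2)"
    by (rule Cauchy_Schwarz_ineq_sum)
  also have "\<dots> = N * coeff_sqnorm D * N"
    using parseval_roots_of_unity[OF deg(3)] by (simp add: z_def)
  also have "\<dots> = (N * sqrt (coeff_sqnorm D))\<^sup>2"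
    using coeff_sqnorm_nonneg[of D] by (simp add: power_mult_distrib power2_eq_square)
  finally have "(\<Sum>j<N. cmod (poly D (z j)))\<^sup>2 \<le> (N * sqrt (coeff_sqnorm D))\<^sup>2"
    by simp
  then have "(\<Sum>j<N. cmod (poly D (z j))) \<le> N * sqrt (coeff_sqnorm D)"
    by (rule power2_le_imp_le) (simp add: coeff_sqnorm_nonneg)
  moreover have "(\<Sum>j<N. (cmod (poly p (z j)))\<^sup>2)
      \<le> (\<Sum>j<N. (cmod (poly q (z j)))\<^sup>2) + (\<Sum>j<N. cmod (poly D (z j)))"
    unfolding sum.distrib[symmetric] by (intro sum_mono pointwise)
  ultimately have "N * coeff_sqnorm p \<le> N * (coeff_sqnorm q + sqrt (coeff_sqnorm D))"
    using parseval_roots_of_unity[OF deg(1)] parseval_roots_of_unity[OF deg(2)]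
    by (simp add: z_def distrib_left)
  then show ?thesis
    unfolding D_def N_def by simp
qed

section \<open>The Parseval estimate for power series\<close>

definition series_poly :: "nat \<Rightarrow> (nat \<Rightarrow> real) \<Rightarrow> real \<Rightarrow> complex poly" where
  "series_poly M a r = (\<Sum>k<M. monom (complex_of_real (a k * r ^ k)) k)"

lemma coeff_series_poly:
  assumes "\<forall>k\<ge>M. a k = 0"
  shows "coeff (series_poly M a r) k = complex_of_real (a k * r ^ k)"
  using assms by (auto simp: series_poly_def coeff_sum coeff_monom not_less)

lemma degree_series_poly:
  assumes "\<forall>k\<ge>M. a k = 0" "0 < M"
  shows "degree (series_poly M a r) < M"
proof -
  have "degree (series_poly M a r) \<le> M - 1"
    using assms by (intro degree_le) (auto simp: coeff_series_poly)
  with assms(2) show ?thesis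
    by linarith
qed

lemma coeff_series_poly_square:
  assumes "\<forall>k\<ge>M. a k = 0"
  shows "coeff (series_poly M a r * series_poly M a r) n = complex_of_real (conv_sq a n * r ^ n)"
proof -
  have "coeff (series_poly M a r * series_poly M a r) n
      = (\<Sum>i\<le>n. complex_of_real (a i * a (n - i) * r ^ n))"
    by (simp add: coeff_mult coeff_series_poly[OF assms] power_add[symmetric] mult_ac)
  then show ?thesis
    by (simp add: conv_sq_def atLeast0AtMost sum_distrib_right)
qed

lemma coeff_sqnorm_series_poly:
  assumes "\<forall>k\<ge>M. a k = 0" "0 < M" "0 \<le> s"
  shows "coeff_sqnorm (series_poly M a (sqrt s)) = (\<Sum>k<M. (a k)\<^sup>2 * s ^ k)"
  using assms
  by (simp add: coeff_sqnorm_eq_sum[OF degree_series_poly] coeff_series_poly norm_mult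
      norm_power power_mult_distrib flip: real_sqrt_power)

lemma power_series_sq_le_finite_support:
  fixes a b :: "nat \<Rightarrow> real"
  assumes a: "\<forall>k\<ge>M. a k = 0" and b: "\<forall>k\<ge>M. b k = 0" and "0 < M" "0 \<le> s"
  shows "(\<Sum>k<M. (a k)\<^sup>2 * s ^ k)
    \<le> (\<Sum>k<M. (b k)\<^sup>2 * s ^ k) + sqrt (\<Sum>n<2*M. (conv_sq a n - conv_sq b n)\<^sup>2 * s ^ n)"
proof -
  define P where "P = series_poly M a (sqrt s)"
  define Q where "Q = series_poly M b (sqrt s)"
  have "degree P < M" "degree Q < M"
    unfolding P_def Q_def using a b \<open>0 < M\<close> by (simp_all add: degree_series_poly)
  then have "degree (P*P) \<le> 2 * (M - 1)" "degree (Q*Q) \<le> 2 * (M - 1)"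
    using degree_mult_le[of P P] degree_mult_le[of Q Q] by linarith+
  with \<open>0 < M\<close> have "degree (P*P - Q*Q) < 2 * M"
    using degree_diff_le by fastforce
  moreover have "coeff (P*P - Q*Q) n = complex_of_real ((conv_sq a n - conv_sq b n) * sqrt s ^ n)" for n
    unfolding P_def Q_def by (simp add: coeff_series_poly_square a b left_diff_distrib)
  ultimately have "coeff_sqnorm (P*P - Q*Q) = (\<Sum>n<2*M. ((conv_sq a n - conv_sq b n) * sqrt s ^ n)\<^sup>2)"
    by (simp only: coeff_sqnorm_eq_sum norm_of_real power2_abs)
  also have "\<dots> = (\<Sum>n<2*M. (conv_sq a n - conv_sq b n)\<^sup>2 * s ^ n)"
    using \<open>0 \<le> s\<close> by (simp add: power_mult_distrib flip: real_sqrt_power)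
  finally show ?thesis
    using coeff_sqnorm_le_square_diff[of P Q] assms
    unfolding P_def Q_def by (simp add: coeff_sqnorm_series_poly)
qed

lemma summable_power_series_quadratic_bound:
  fixes f :: "nat \<Rightarrow> real"
  assumes "\<And>n. \<bar>f n\<bar> \<le> C * (real n + 1)\<^sup>2" "0 \<le> s" "s < 1"
  shows "summable (\<lambda>n. f n * s ^ n)"
proof -
  have geometric: "summable (\<lambda>n. (\<lambda>_. 1) n * x ^ n)" if "norm x < 1" for x :: real
    using summable_geometric[OF that] by simp
  have "summable (\<lambda>n. diffs (\<lambda>_. 1) n * x ^ n)" if "norm x < 1" for x :: real
    by (rule termdiff_converges[OF that geometric])
  then have "summable (\<lambda>n. diffs (diffs (\<lambda>_. 1)) n * s ^ n)"
    by (intro termdiff_converges[of s 1]) (use assms in auto)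
  moreover have "diffs (diffs (\<lambda>_. 1)) n = (real n + 1) * (real n + 2)" for n
    by (simp add: diffs_def algebra_simps)
  ultimately have majorant: "summable (\<lambda>n. C * ((real n + 1) * (real n + 2) * s ^ n))"
    by (intro summable_mult) simp
  have "0 \<le> C"
    using assms(1)[of 0] by simp
  from majorant show ?thesis
  proof (rule summable_comparison_test')
    fix n
    have "\<bar>f n\<bar> * s ^ n \<le> C * ((real n + 1)\<^sup>2 * s ^ n)"
      using assms by (simp add: mult_right_mono flip: mult.assoc)
    also have "\<dots> \<le> C * ((real n + 1) * (real n + 2) * s ^ n)"
      using \<open>0 \<le> C\<close> \<open>0 \<le> s\<close>
      by (intro mult_left_mono mult_right_mono) (simp_all add: power2_eq_square)
    finally show "norm (f n * s ^ n) \<le> C * ((real n + 1) * (real n + 2) * s ^ n)"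
      using assms by (simp add: abs_mult)
  qed
qed

lemma summable_power_series_linear_bound:
  fixes f :: "nat \<Rightarrow> real"
  assumes "\<And>n. \<bar>f n\<bar> \<le> real n + 1" "0 \<le> s" "s < 1"
  shows "summable (\<lambda>n. f n * s ^ n)"
proof (rule summable_power_series_quadratic_bound[of _ 1, OF _ assms(2,3)])
  fix n
  have "real n + 1 \<le> (real n + 1)\<^sup>2"
    by (simp add: power2_eq_square)
  with assms(1)[of n] show "\<bar>f n\<bar> \<le> 1 * (real n + 1)\<^sup>2"
    by simp
qed

lemma conv_sq_nonneg: "(\<And>n. 0 \<le> a n) \<Longrightarrow> 0 \<le> conv_sq a n"
  unfolding conv_sq_def by (intro sum_nonneg) simp

lemma abs_conv_sq_le:
  assumes "\<And>n. \<bar>a n\<bar> \<le> 1"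
  shows "\<bar>conv_sq a n\<bar> \<le> real n + 1"
proof -
  have "\<bar>conv_sq a n\<bar> \<le> (\<Sum>k=0..n. \<bar>a k\<bar> * \<bar>a (n - k)\<bar>)"
    unfolding conv_sq_def abs_mult[symmetric] by (rule sum_abs)
  also have "\<dots> \<le> (\<Sum>k=0..n. 1)"
    using assms by (intro sum_mono mult_le_one) auto
  finally show ?thesis
    by simp
qed

lemma conv_sq_truncation:
  assumes "n < M"
  shows "conv_sq (\<lambda>k. if k < M then a k else 0) n = conv_sq a n"
  unfolding conv_sq_def using assms by (intro sum.cong) auto

lemma conv_sq_diff_sq_le:
  assumes "\<And>n. \<bar>a n\<bar> \<le> 1" "\<And>n. \<bar>b n\<bar> \<le> 1"
  shows "(conv_sq a n - conv_sq b n)\<^sup>2 \<le> 4 * (real n + 1)\<^sup>2"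
proof -
  have "\<bar>conv_sq a n - conv_sq b n\<bar> \<le> 2 * (real n + 1)"
    using abs_conv_sq_le[of a n, OF assms(1)] abs_conv_sq_le[of b n, OF assms(2)]
    by (intro order_trans[OF abs_triangle_ineq4]) simp
  then have "(conv_sq a n - conv_sq b n)\<^sup>2 \<le> (2 * (real n + 1))\<^sup>2"
    using power_mono[OF _ abs_ge_zero, of _ _ 2] by (metis power2_abs)
  also have "(2 * (real n + 1))\<^sup>2 = 4 * (real n + 1)\<^sup>2"
    by (simp only: power_mult_distrib) simp
  finally show ?thesis .
qed

lemma summable_bounded_power_series:
  fixes a :: "nat \<Rightarrow> real"
  assumes "\<And>n. \<bar>a n\<bar> \<le> 1" "0 \<le> s" "s < 1"
  shows "summable (\<lambda>n. a n * s ^ n)" "summable (\<lambda>n. \<bar>a n\<bar> * s ^ n)"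
    "summable (\<lambda>n. (a n)\<^sup>2 * s ^ n)" "summable (\<lambda>n. conv_sq a n * s ^ n)"
  using assms abs_conv_sq_le[of a, OF assms(1)]
  by (auto intro!: summable_power_series_linear_bound simp: abs_square_le_1 intro: order_trans[of _ 1])

lemma summable_conv_sq_diff_power_series:
  fixes a b :: "nat \<Rightarrow> real"
  assumes "\<And>n. \<bar>a n\<bar> \<le> 1" "\<And>n. \<bar>b n\<bar> \<le> 1" "0 \<le> s" "s < 1"
  shows "summable (\<lambda>n. (conv_sq a n - conv_sq b n)\<^sup>2 * s ^ n)"
  using assms by (intro summable_power_series_quadratic_bound[of _ 4]) (simp_all add: conv_sq_diff_sq_le)

lemma power_series_square:
  fixes a :: "nat \<Rightarrow> real"
  assumes "summable (\<lambda>n. norm (a n * s ^ n))"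
  shows "(\<Sum>n. a n * s ^ n)\<^sup>2 = (\<Sum>n. conv_sq a n * s ^ n)"
proof -
  have "(\<Sum>n. a n * s ^ n)\<^sup>2 = (\<Sum>n. \<Sum>k\<le>n. (a k * s ^ k) * (a (n - k) * s ^ (n - k)))"
    unfolding power2_eq_square by (rule Cauchy_product[OF assms assms])
  also have "\<dots> = (\<Sum>n. conv_sq a n * s ^ n)"
  proof (rule suminf_cong)
    fix n
    have "(a k * s ^ k) * (a (n - k) * s ^ (n - k)) = a k * a (n - k) * s ^ n" if "k \<le> n" for k
      using that by (simp add: mult_ac flip: power_add)
    then have "(\<Sum>k\<le>n. (a k * s ^ k) * (a (n - k) * s ^ (n - k)))
        = (\<Sum>k\<le>n. a k * a (n - k) * s ^ n)"
      by (intro sum.cong) auto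
    then show "(\<Sum>k\<le>n. (a k * s ^ k) * (a (n - k) * s ^ (n - k))) = conv_sq a n * s ^ n"
      by (simp add: conv_sq_def atLeast0AtMost sum_distrib_right)
  qed
  finally show ?thesis .
qed

lemma sum_doubling_range_tendsto_zero:
  fixes g :: "nat \<Rightarrow> real"
  assumes "summable g"
  shows "(\<lambda>M. \<Sum>n\<in>{M..<2*M}. g n) \<longlonglongrightarrow> 0"
proof -
  have partial: "(\<lambda>M. \<Sum>n<M. g n) \<longlonglongrightarrow> suminf g"
    by (rule summable_LIMSEQ[OF assms])
  then have doubled: "(\<lambda>M. \<Sum>n<2*M. g n) \<longlonglongrightarrow> suminf g"
    using LIMSEQ_subseq_LIMSEQ[of _ _ "\<lambda>M. 2*M"] by (simp add: strict_mono_def o_def)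
  have "(\<Sum>n\<in>{M..<2*M}. g n) = (\<Sum>n<2*M. g n) - (\<Sum>n<M. g n)" for M
    by (simp add: lessThan_atLeast0 sum_diff_nat_ivl)
  then show ?thesis
    using tendsto_diff[OF doubled partial] by simp
qed

lemma power_series_sq_le_partial:
  fixes a b :: "nat \<Rightarrow> real"
  assumes a: "\<And>n. \<bar>a n\<bar> \<le> 1" and b: "\<And>n. \<bar>b n\<bar> \<le> 1" and "0 < M" "0 \<le> s"
  shows "(\<Sum>k<M. (a k)\<^sup>2 * s ^ k) \<le> (\<Sum>k<M. (b k)\<^sup>2 * s ^ k)
    + sqrt ((\<Sum>n<M. (conv_sq a n - conv_sq b n)\<^sup>2 * s ^ n)
      + (\<Sum>n\<in>{M..<2*M}. 4 * (real n + 1)\<^sup>2 * s ^ n))"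
proof -
  define aM where "aM = (\<lambda>k. if k < M then a k else 0)"
  define bM where "bM = (\<lambda>k. if k < M then b k else 0)"
  have "\<bar>aM n\<bar> \<le> 1" "\<bar>bM n\<bar> \<le> 1" for n
    using a b by (simp_all add: aM_def bM_def)
  then have tail: "(conv_sq aM n - conv_sq bM n)\<^sup>2 * s ^ n \<le> 4 * (real n + 1)\<^sup>2 * s ^ n" for n
    using \<open>0 \<le> s\<close> by (intro mult_right_mono conv_sq_diff_sq_le) simp_all
  define f where "f n = (conv_sq aM n - conv_sq bM n)\<^sup>2 * s ^ n" for n
  have "(\<Sum>n<2*M. f n) = (\<Sum>n<M. f n) + (\<Sum>n\<in>{M..<2*M}. f n)"
    using sum.atLeastLessThan_concat[of 0 M "2*M" f] by (simp add: lessThan_atLeast0)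
  moreover have "(\<Sum>n<M. f n) = (\<Sum>n<M. (conv_sq a n - conv_sq b n)\<^sup>2 * s ^ n)"
    unfolding f_def aM_def bM_def by (intro sum.cong) (simp_all add: conv_sq_truncation)
  moreover have "(\<Sum>n\<in>{M..<2*M}. f n) \<le> (\<Sum>n\<in>{M..<2*M}. 4 * (real n + 1)\<^sup>2 * s ^ n)"
    unfolding f_def by (intro sum_mono tail)
  ultimately have "(\<Sum>n<2*M. f n) \<le> (\<Sum>n<M. (conv_sq a n - conv_sq b n)\<^sup>2 * s ^ n)
      + (\<Sum>n\<in>{M..<2*M}. 4 * (real n + 1)\<^sup>2 * s ^ n)"
    by linarith
  then have sqrt_bound: "sqrt (\<Sum>n<2*M. (conv_sq aM n - conv_sq bM n)\<^sup>2 * s ^ n)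
      \<le> sqrt ((\<Sum>n<M. (conv_sq a n - conv_sq b n)\<^sup>2 * s ^ n)
        + (\<Sum>n\<in>{M..<2*M}. 4 * (real n + 1)\<^sup>2 * s ^ n))"
    unfolding f_def by (rule real_sqrt_le_mono)
  have vanish: "\<forall>k\<ge>M. aM k = 0" "\<forall>k\<ge>M. bM k = 0"
    by (simp_all add: aM_def bM_def)
  have "(\<Sum>k<M. (aM k)\<^sup>2 * s ^ k) = (\<Sum>k<M. (a k)\<^sup>2 * s ^ k)"
    "(\<Sum>k<M. (bM k)\<^sup>2 * s ^ k) = (\<Sum>k<M. (b k)\<^sup>2 * s ^ k)"
    by (simp_all add: aM_def bM_def)
  with power_series_sq_le_finite_support[OF vanish \<open>0 < M\<close> \<open>0 \<le> s\<close>] sqrt_bound show ?thesis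
    by linarith
qed

lemma power_series_sq_le:
  fixes a b :: "nat \<Rightarrow> real"
  assumes a: "\<And>n. \<bar>a n\<bar> \<le> 1" and b: "\<And>n. \<bar>b n\<bar> \<le> 1" and s: "0 \<le> s" "s < 1"
  shows "(\<Sum>n. (a n)\<^sup>2 * s ^ n)
    \<le> (\<Sum>n. (b n)\<^sup>2 * s ^ n) + sqrt (\<Sum>n. (conv_sq a n - conv_sq b n)\<^sup>2 * s ^ n)"
proof -
  have summable_a: "summable (\<lambda>n. (a n)\<^sup>2 * s ^ n)"
    and summable_b: "summable (\<lambda>n. (b n)\<^sup>2 * s ^ n)"
    using summable_bounded_power_series[OF _ s] a b by blast+
  have summable_diff: "summable (\<lambda>n. (conv_sq a n - conv_sq b n)\<^sup>2 * s ^ n)"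
    using a b s by (rule summable_conv_sq_diff_power_series)
  have "summable (\<lambda>n. 4 * (real n + 1)\<^sup>2 * s ^ n)"
    using s by (intro summable_power_series_quadratic_bound[of _ 4]) simp
  then have tail: "(\<lambda>M. \<Sum>n\<in>{M..<2*M}. 4 * (real n + 1)\<^sup>2 * s ^ n) \<longlonglongrightarrow> 0"
    by (rule sum_doubling_range_tendsto_zero)
  define Z where "Z = (\<Sum>n. (b n)\<^sup>2 * s ^ n)"
  define W where "W = (\<Sum>n. (conv_sq a n - conv_sq b n)\<^sup>2 * s ^ n)"
  have "(\<lambda>M. \<Sum>k<M. (a k)\<^sup>2 * s ^ k) \<longlonglongrightarrow> (\<Sum>n. (a n)\<^sup>2 * s ^ n)"
    by (rule summable_LIMSEQ[OF summable_a])
  moreover have "(\<lambda>M. Z + sqrt (W + (\<Sum>n\<in>{M..<2*M}. 4 * (real n + 1)\<^sup>2 * s ^ n)))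
      \<longlonglongrightarrow> Z + sqrt (W + 0)"
    by (intro tendsto_intros tail)
  moreover have "\<exists>N. \<forall>M\<ge>N. (\<Sum>k<M. (a k)\<^sup>2 * s ^ k)
      \<le> Z + sqrt (W + (\<Sum>n\<in>{M..<2*M}. 4 * (real n + 1)\<^sup>2 * s ^ n))"
  proof (intro exI allI impI)
    fix M :: nat
    assume "1 \<le> M"
    have "(\<Sum>k<M. (b k)\<^sup>2 * s ^ k) \<le> Z"
      unfolding Z_def using s by (intro sum_le_suminf[OF summable_b]) auto
    moreover have "(\<Sum>n<M. (conv_sq a n - conv_sq b n)\<^sup>2 * s ^ n) \<le> W"
      unfolding W_def using s by (intro sum_le_suminf[OF summable_diff]) auto
    then have "sqrt ((\<Sum>n<M. (conv_sq a n - conv_sq b n)\<^sup>2 * s ^ n)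
          + (\<Sum>n\<in>{M..<2*M}. 4 * (real n + 1)\<^sup>2 * s ^ n))
        \<le> sqrt (W + (\<Sum>n\<in>{M..<2*M}. 4 * (real n + 1)\<^sup>2 * s ^ n))"
      by (intro real_sqrt_le_mono add_right_mono)
    ultimately show "(\<Sum>k<M. (a k)\<^sup>2 * s ^ k)
        \<le> Z + sqrt (W + (\<Sum>n\<in>{M..<2*M}. 4 * (real n + 1)\<^sup>2 * s ^ n))"
      using power_series_sq_le_partial[of a b M s, OF a b _ s(1)] \<open>1 \<le> M\<close> by linarith
  qed
  ultimately have "(\<Sum>n. (a n)\<^sup>2 * s ^ n) \<le> Z + sqrt (W + 0)"
    by (rule LIMSEQ_le)
  then show ?thesis
    unfolding Z_def W_def by simp
qed

section \<open>Growth of the generating functions\<close>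

lemma power_series_le_eventually:
  fixes f g :: "nat \<Rightarrow> real"
  assumes le: "\<forall>n\<ge>N. f n \<le> g n"
    and f: "summable (\<lambda>n. f n * s ^ n)" and g: "summable (\<lambda>n. g n * s ^ n)"
    and "0 \<le> s" "s \<le> 1"
  shows "(\<Sum>n. f n * s ^ n) \<le> (\<Sum>n. g n * s ^ n) + (\<Sum>n<N. \<bar>f n - g n\<bar>)"
proof -
  define h where "h n = (if n \<in> {..<N} then \<bar>f n - g n\<bar> else 0)" for n
  have h: "h sums (\<Sum>n<N. \<bar>f n - g n\<bar>)"
    unfolding h_def by (rule sums_If_finite_set) simp
  have "f n * s ^ n \<le> g n * s ^ n + h n" for n
  proof (cases "n < N")
    case True
    have "(f n - g n) * s ^ n \<le> \<bar>f n - g n\<bar> * 1"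
      using \<open>0 \<le> s\<close> \<open>s \<le> 1\<close> by (intro mult_mono) (auto simp: power_le_one)
    with True show ?thesis
      by (simp add: h_def left_diff_distrib)
  next
    case False
    with le \<open>0 \<le> s\<close> show ?thesis
      by (simp add: h_def mult_right_mono)
  qed
  then have "(\<Sum>n. f n * s ^ n) \<le> (\<Sum>n. g n * s ^ n + h n)"
    using f g h by (intro suminf_le summable_add) (auto simp: sums_iff)
  also have "\<dots> = (\<Sum>n. g n * s ^ n) + (\<Sum>n<N. \<bar>f n - g n\<bar>)"
    using g h by (simp add: suminf_add[symmetric] sums_iff)
  finally show ?thesis .
qed

lemma power_series_unbounded:
  fixes c :: "nat \<Rightarrow> real"
  assumes "\<And>n. 0 \<le> c n" "filterlim c at_top sequentially"
    and "\<And>s. 0 \<le> s \<Longrightarrow> s < 1 \<Longrightarrow> summable (\<lambda>n. c n * s ^ n)"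
  obtains s where "0 \<le> s" "s < 1" "T \<le> (\<Sum>n. c n * s ^ n)"
proof -
  have "\<forall>\<^sub>F n in sequentially. 2 * T \<le> c n \<and> 1 \<le> n"
    using assms(2) by (simp add: filterlim_at_top eventually_conj eventually_ge_at_top)
  then obtain n where n: "2 * T \<le> c n" "1 \<le> n"
    using eventually_sequentially by auto
  define s where "s = root n (1/2)"
  have s: "0 \<le> s" "s < 1" "s ^ n = 1/2"
    using n by (simp_all add: s_def real_root_ge_zero)
  have "c n * s ^ n \<le> (\<Sum>n. c n * s ^ n)"
    using sum_le_suminf[OF assms(3)[OF s(1,2)], of "{n}"] assms(1) s(1) by simp
  moreover have "T \<le> c n * s ^ n"
    using n(1) by (simp only: s(3))
  ultimately show ?thesis
    by (intro that[OF s(1,2)]) linarith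
qed

lemma estimates_imp_bounded:
  fixes X Y Z W \<beta> \<epsilon> K1 K2 K3 :: real
  assumes "0 \<le> X" "0 \<le> Y" "0 < \<epsilon>" "0 \<le> \<beta>" "\<beta> + 4 * \<epsilon> \<le> 1"
    and "0 \<le> K1" "0 \<le> K2" "0 \<le> K3"
    and X: "X \<le> Z + sqrt W" and Z: "Z \<le> \<beta> * Y + K1" and W: "W \<le> \<epsilon>\<^sup>2 * Y\<^sup>2 + K2"
    and XY: "(1 - \<epsilon>) * Y\<^sup>2 \<le> X\<^sup>2 + K3"
  shows "Y \<le> max 1 ((2 * (K1 + sqrt K2) + (K1 + sqrt K2)\<^sup>2 + K3) / (2 * \<epsilon>))"
proof -
  define C where "C = K1 + sqrt K2"
  define t where "t = \<beta> + \<epsilon>"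
  have t: "0 \<le> t" "t \<le> 1 - 3 * \<epsilon>"
    using assms unfolding t_def by linarith+
  have "sqrt W \<le> sqrt (\<epsilon>\<^sup>2 * Y\<^sup>2) + sqrt K2"
    using assms by (intro order_trans[OF real_sqrt_le_mono[OF W] sqrt_add_le_add_sqrt]) simp_all
  also have "sqrt (\<epsilon>\<^sup>2 * Y\<^sup>2) = \<epsilon> * Y"
    using assms by (simp add: real_sqrt_mult)
  finally have "X \<le> t * Y + C"
    using X Z unfolding t_def C_def by (simp add: algebra_simps)
  then have "X\<^sup>2 \<le> (t * Y + C)\<^sup>2"
    using \<open>0 \<le> X\<close> by (rule power_mono)
  also have "\<dots> = t * t * Y\<^sup>2 + 2 * t * C * Y + C\<^sup>2"
    by (simp add: power2_eq_square algebra_simps)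
  also have "\<dots> \<le> (1 - 3 * \<epsilon>) * Y\<^sup>2 + 2 * C * Y + C\<^sup>2"
  proof -
    have "t * t \<le> 1 * (1 - 3 * \<epsilon>)"
      by (rule mult_mono) (use t assms in linarith)+
    then have t2: "t * t * Y\<^sup>2 \<le> (1 - 3 * \<epsilon>) * Y\<^sup>2"
      by (intro mult_right_mono) simp_all
    have "0 \<le> C * Y"
      using assms by (simp add: C_def)
    then have "t * (C * Y) \<le> 1 * (C * Y)"
      using t assms by (intro mult_right_mono) linarith+
    then have "2 * t * C * Y \<le> 2 * C * Y"
      by (simp add: mult.assoc)
    with t2 show ?thesis
      by linarith
  qed
  finally have quadratic: "2 * \<epsilon> * Y\<^sup>2 \<le> 2 * C * Y + C\<^sup>2 + K3"
    using XY by (simp add: algebra_simps)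
  show ?thesis
  proof (cases "Y \<le> 1")
    case False
    have "(C\<^sup>2 + K3) * 1 \<le> (C\<^sup>2 + K3) * Y"
      using False assms by (intro mult_left_mono) simp_all
    then have "2 * C * Y + C\<^sup>2 + K3 \<le> (2 * C + C\<^sup>2 + K3) * Y"
      by (simp add: algebra_simps)
    with quadratic have "(2 * \<epsilon> * Y) * Y \<le> (2 * C + C\<^sup>2 + K3) * Y"
      by (simp add: power2_eq_square mult.assoc)
    then have "2 * \<epsilon> * Y \<le> 2 * C + C\<^sup>2 + K3"
      using False by simp
    then have "Y \<le> (2 * C + C\<^sup>2 + K3) / (2 * \<epsilon>)"
      using \<open>0 < \<epsilon>\<close> by (simp add: pos_le_divide_eq mult.commute)
    then show ?thesis
      unfolding C_def by simp
  qed simp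
qed

lemma rep_count_eq_conv_sq: "real (rep_count A n) = conv_sq (indicator A) n"
proof -
  define I where "I = {0..n} \<inter> {i. i \<in> A \<and> n - i \<in> A}"
  have "{(a, a'). a \<in> A \<and> a' \<in> A \<and> a + a' = n} = (\<lambda>i. (i, n - i)) ` I"
    by (auto simp: I_def image_iff)
  moreover have "inj_on (\<lambda>i. (i, n - i)) I"
    by (auto intro: inj_onI)
  ultimately have "rep_count A n = card I"
    by (simp add: rep_count_def card_image)
  moreover have "conv_sq (indicator A) n = (\<Sum>i\<in>{0..n}. of_bool (i \<in> I))"
    unfolding conv_sq_def I_def by (intro sum.cong) (auto simp: indicator_def)
  moreover have "{0..n} \<inter> I = I"
    by (auto simp: I_def)
  ultimately show ?thesis
    by simp
qed

lemma limsup_less_one_imp_eventually_le: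
  fixes b :: "nat \<Rightarrow> real"
  assumes "limsup (\<lambda>n. ereal (b n)) < 1"
  obtains \<beta> where "0 \<le> \<beta>" "\<beta> < 1" "\<forall>\<^sub>F n in sequentially. b n \<le> \<beta>"
proof -
  obtain r :: real where r: "limsup (\<lambda>n. ereal (b n)) < ereal r" "ereal r < 1"
    using ereal_dense2[OF assms] by blast
  have "\<forall>\<^sub>F n in sequentially. b n \<le> max r 0"
    using Limsup_lessD[OF r(1)] by eventually_elim simp
  with r(2) show ?thesis
    by (intro that[of "max r 0"]) auto
qed

lemma smallo_sqrt_eventually_le:
  fixes e c :: "nat \<Rightarrow> real"
  assumes "e \<in> o(\<lambda>n. sqrt (c n))" "filterlim c at_top sequentially" "0 < \<epsilon>"
  shows "\<forall>\<^sub>F n in sequentially. \<bar>e n\<bar> \<le> \<epsilon> * c n \<and> (e n)\<^sup>2 \<le> \<epsilon>\<^sup>2 * c n"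
  using landau_o.smallD[OF assms(1,3)] assms(2)[unfolded filterlim_at_top, rule_format, of 1]
proof eventually_elim
  case (elim n)
  then have e: "\<bar>e n\<bar> \<le> \<epsilon> * sqrt (c n)" and c: "1 \<le> c n"
    by simp_all
  have "sqrt (c n) * 1 \<le> sqrt (c n) * sqrt (c n)"
    using c by (intro mult_left_mono) auto
  then have "sqrt (c n) \<le> c n"
    using c by simp
  then have "\<bar>e n\<bar> \<le> \<epsilon> * c n"
    using e \<open>0 < \<epsilon>\<close> by (meson mult_left_mono less_imp_le order_trans)
  moreover have "(e n)\<^sup>2 \<le> (\<epsilon> * sqrt (c n))\<^sup>2"
    using e by (metis abs_ge_zero power2_abs power_mono)
  ultimately show ?case
    using c by (simp add: power_mult_distrib)
qed

lemma generating_function_le: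
  fixes b :: "nat \<Rightarrow> real" and A :: "nat set" and \<beta> \<epsilon> s :: real and n0 N :: nat
  defines "a \<equiv> indicator A :: nat \<Rightarrow> real"
  defines "e \<equiv> \<lambda>n. conv_sq a n - conv_sq b n"
  defines "K1 \<equiv> \<Sum>n<n0. \<bar>(b n)\<^sup>2 - \<beta> * b n\<bar>"
    and "K2 \<equiv> \<Sum>n<N. \<bar>(e n)\<^sup>2 - \<epsilon>\<^sup>2 * conv_sq b n\<bar>"
    and "K3 \<equiv> \<Sum>n<N. \<bar>(1 - \<epsilon>) * conv_sq b n - conv_sq a n\<bar>"
  assumes b: "\<And>n. 0 \<le> b n \<and> b n \<le> 1"
    and parameters: "0 \<le> \<beta>" "0 < \<epsilon>" "\<beta> + 4 * \<epsilon> \<le> 1"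
    and n0: "\<forall>n\<ge>n0. b n \<le> \<beta>"
    and N: "\<forall>n\<ge>N. \<bar>e n\<bar> \<le> \<epsilon> * conv_sq b n \<and> (e n)\<^sup>2 \<le> \<epsilon>\<^sup>2 * conv_sq b n"
    and s: "0 \<le> s" "s < 1"
  shows "(\<Sum>n. b n * s ^ n) \<le> max 1 ((2 * (K1 + sqrt K2) + (K1 + sqrt K2)\<^sup>2 + K3) / (2 * \<epsilon>))"
proof -
  have a01: "\<bar>a n\<bar> \<le> 1" and b01: "\<bar>b n\<bar> \<le> 1" and a_sq: "(a n)\<^sup>2 = a n" for n
    using b[of n] by (simp_all add: a_def indicator_def)
  note summable_a = summable_bounded_power_series[where a = a, OF a01 s]
  note summable_b = summable_bounded_power_series[where a = b, OF b01 s]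
  have summable_e: "summable (\<lambda>n. (e n)\<^sup>2 * s ^ n)"
    unfolding e_def using a01 b01 s by (rule summable_conv_sq_diff_power_series)
  define X where "X = (\<Sum>n. a n * s ^ n)"
  define Y where "Y = (\<Sum>n. b n * s ^ n)"
  have "0 \<le> X"
    unfolding X_def using s by (intro suminf_nonneg[OF summable_a(1)]) (simp add: a_def)
  have "0 \<le> Y"
    unfolding Y_def using b s by (intro suminf_nonneg[OF summable_b(1)]) simp
  have X2: "X\<^sup>2 = (\<Sum>n. conv_sq a n * s ^ n)" and Y2: "Y\<^sup>2 = (\<Sum>n. conv_sq b n * s ^ n)"
    unfolding X_def Y_def using summable_a(2) summable_b(2) s
    by (auto intro!: power_series_square simp: abs_mult)
  have lower: "\<forall>n\<ge>N. (1 - \<epsilon>) * conv_sq b n \<le> conv_sq a n"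
    using N by (auto simp: e_def abs_le_iff algebra_simps)
  have "X \<le> (\<Sum>n. (b n)\<^sup>2 * s ^ n) + sqrt (\<Sum>n. (e n)\<^sup>2 * s ^ n)"
    using power_series_sq_le[of a b s, OF a01 b01 s] unfolding X_def e_def a_sq .
  moreover have "(\<Sum>n. (b n)\<^sup>2 * s ^ n) \<le> \<beta> * Y + K1"
    using power_series_le_eventually[of n0 "\<lambda>n. (b n)\<^sup>2" "\<lambda>n. \<beta> * b n" s]
      n0 b summable_b summable_mult[OF summable_b(1), of \<beta>] suminf_mult[OF summable_b(1), of \<beta>] s
    unfolding Y_def K1_def by (simp add: power2_eq_square mult_right_mono mult.assoc)
  moreover have "(\<Sum>n. (e n)\<^sup>2 * s ^ n) \<le> \<epsilon>\<^sup>2 * Y\<^sup>2 + K2"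
    using power_series_le_eventually[of N "\<lambda>n. (e n)\<^sup>2" "\<lambda>n. \<epsilon>\<^sup>2 * conv_sq b n" s] N summable_e
      summable_mult[OF summable_b(4), of "\<epsilon>\<^sup>2"] suminf_mult[OF summable_b(4), of "\<epsilon>\<^sup>2"] s
    unfolding Y2 K2_def by (simp add: mult.assoc)
  moreover have "(1 - \<epsilon>) * Y\<^sup>2 \<le> X\<^sup>2 + K3"
    using power_series_le_eventually[of N "\<lambda>n. (1 - \<epsilon>) * conv_sq b n" "conv_sq a" s] lower summable_a
      summable_mult[OF summable_b(4), of "1 - \<epsilon>"] suminf_mult[OF summable_b(4), of "1 - \<epsilon>"] s
    unfolding X2 Y2 K3_def by (simp add: mult.assoc)
  ultimately show ?thesis
    using \<open>0 \<le> X\<close> \<open>0 \<le> Y\<close> parameters unfolding Y_def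
    by (intro estimates_imp_bounded[of X _ \<epsilon> \<beta> K1 K2 K3]) (simp_all add: K1_def K2_def K3_def)
qed

lemma generating_function_bounded:
  fixes b :: "nat \<Rightarrow> real" and A :: "nat set"
  assumes "\<And>n. 0 \<le> b n \<and> b n \<le> 1"
    and "0 \<le> \<beta>" "0 < \<epsilon>" "\<beta> + 4 * \<epsilon> \<le> 1"
    and "\<forall>\<^sub>F n in sequentially. b n \<le> \<beta>"
    and "\<forall>\<^sub>F n in sequentially. \<bar>conv_sq (indicator A) n - conv_sq b n\<bar> \<le> \<epsilon> * conv_sq b n
      \<and> (conv_sq (indicator A) n - conv_sq b n)\<^sup>2 \<le> \<epsilon>\<^sup>2 * conv_sq b n"
  obtains B where "\<And>s. 0 \<le> s \<Longrightarrow> s < 1 \<Longrightarrow> (\<Sum>n. b n * s ^ n) \<le> B"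
proof -
  obtain n0 N where "\<forall>n\<ge>n0. b n \<le> \<beta>"
    and "\<forall>n\<ge>N. \<bar>conv_sq (indicator A) n - conv_sq b n\<bar> \<le> \<epsilon> * conv_sq b n
      \<and> (conv_sq (indicator A) n - conv_sq b n)\<^sup>2 \<le> \<epsilon>\<^sup>2 * conv_sq b n"
    using assms(5,6) by (auto simp: eventually_sequentially)
  then show ?thesis
    using that generating_function_le[where b = b and A = A, OF assms(1-4)] by blast
qed

lemma generating_function_unbounded:
  fixes b :: "nat \<Rightarrow> real"
  assumes "\<And>n. 0 \<le> b n \<and> b n \<le> 1" "filterlim (conv_sq b) at_top sequentially"
  obtains s where "0 \<le> s" "s < 1" "T < (\<Sum>n. b n * s ^ n)"
proof -
  have b01: "\<bar>b n\<bar> \<le> 1" for n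
    using assms(1)[of n] by simp
  obtain s where s: "0 \<le> s" "s < 1" "(max T 0 + 1)\<^sup>2 \<le> (\<Sum>n. conv_sq b n * s ^ n)"
    using power_series_unbounded[OF conv_sq_nonneg assms(2)
        summable_bounded_power_series(4)[where a = b, OF b01]] assms(1)
    by blast
  have "(\<Sum>n. conv_sq b n * s ^ n) = (\<Sum>n. b n * s ^ n)\<^sup>2"
    using summable_bounded_power_series(2)[where a = b, OF b01 s(1,2)] s(1)
    by (intro power_series_square[symmetric]) (simp add: abs_mult)
  with s(3) have "(max T 0 + 1)\<^sup>2 \<le> (\<Sum>n. b n * s ^ n)\<^sup>2"
    by simp
  moreover have "0 \<le> (\<Sum>n. b n * s ^ n)"
    using assms(1) s by (intro suminf_nonneg[OF summable_bounded_power_series(1)[where a = b, OF b01 s(1,2)]])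
      simp
  ultimately have "max T 0 + 1 \<le> (\<Sum>n. b n * s ^ n)"
    by (rule power2_le_imp_le)
  with s show ?thesis
    by (intro that) auto
qed

theorem theorem9:
  fixes b :: "nat \<Rightarrow> real"
  assumes "\<And>n. 0 \<le> b n \<and> b n \<le> 1"
    and "limsup (\<lambda>n. ereal (b n)) < 1"
    and "filterlim (conv_sq b) at_top sequentially"
  shows "\<not> (\<exists>A :: nat set.
           (\<lambda>n. real (rep_count A n) - conv_sq b n) \<in> o(\<lambda>n. sqrt (conv_sq b n)))"
proof
  assume "\<exists>A :: nat set. (\<lambda>n. real (rep_count A n) - conv_sq b n) \<in> o(\<lambda>n. sqrt (conv_sq b n))"
  then obtain A where A: "(\<lambda>n. conv_sq (indicator A) n - conv_sq b n) \<in> o(\<lambda>n. sqrt (conv_sq b n))"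
    by (auto simp: rep_count_eq_conv_sq)
  obtain \<beta> where \<beta>: "0 \<le> \<beta>" "\<beta> < 1" "\<forall>\<^sub>F n in sequentially. b n \<le> \<beta>"
    using limsup_less_one_imp_eventually_le[OF assms(2)] .
  define \<epsilon> where "\<epsilon> = (1 - \<beta>) / 4"
  have \<epsilon>: "0 < \<epsilon>" "\<beta> + 4 * \<epsilon> \<le> 1"
    using \<beta> by (simp_all add: \<epsilon>_def field_simps)
  obtain B where "\<And>s. 0 \<le> s \<Longrightarrow> s < 1 \<Longrightarrow> (\<Sum>n. b n * s ^ n) \<le> B"
    by (rule generating_function_bounded[OF assms(1) \<beta>(1) \<epsilon> \<beta>(3)
        smallo_sqrt_eventually_le[OF A assms(3) \<epsilon>(1)]]) (rule that)
  moreover obtain s where "0 \<le> s" "s < 1" "B < (\<Sum>n. b n * s ^ n)"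
    using generating_function_unbounded[OF assms(1,3)] .
  ultimately show False
    by fastforce
qed

end
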